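(* Let $n,m$ be such that $\Gamma_{n,m}$ is defined, and consider a nearest-neighbour random walk on $\Gamma_{n,m}$ whose step distribution $\mu$ on $\{r_1,\dots,r_n\}$ satisfies $\mu(r_i)>0$ for all $1\le i\le n$. Let $g\in\Gamma_{n,m}$ be hyperbolic, i.e. there is a geodesic line $\xi\subset\mathbb{H}^2$ and $L>0$ with $d_{\mathbb{H}^2}(x,g.x)=L$ for all $x\in\xi$. Suppose $g=s_1\cdots s_{|g|}$ with each $s_j\in\{r_1,\dots,r_n\}$, where $|g|$ is the word length of $g$ with respect to $\{r_1,\dots,r_n\}$, and suppose \[ L > -\sum_{j=1}^{|g|}\log\mu(s_j). \] Then for any choice of base point $x_0\in\mathbb{H}^2$ (with trivial stabilizer) defining the geometric distance $d_{\mathbb{H}^2}$, \[ \sup_{k\ge 1}\,\bigl| d_\mu(e,g^k)-d_{\mathbb{H}^2}(e,g^k)\bigr| = \infty . \]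
   Context: $\Delta_{n,m}$ is a regular hyperbolic polygon with $n$ sides and interior angles $\frac{2\pi}{m}$ ($m\ge4$ even); $\Gamma_{n,m}$ is the group generated by the reflections $r_1,\dots,r_n$ in its sides. Geometric distance: for $x_0\in\mathbb{H}^2$ with trivial stabilizer, $d_{\mathbb{H}^2}(g,h)=d_{\mathbb{H}^2}(g.x_0,h.x_0)$. The random walk is $X_k=\xi_1\cdots\xi_k$, $X_0=e$, $\xi_i$ i.i.d. with law $\mu$. The first-entrance function is $F_\mu(x,y)=\mathbb{P}^e(\exists k: X_k=x^{-1}y)$ and the Green metric is $d_\mu(x,y)=-\log F_\mu(x,y)$. *)

theory Defs
  imports "HOL-Analysis.Analysis" "HOL-Probability.Probability"
begin

definition hdisk :: "complex set" where
  "hdisk = ball 0 1"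

definition hdist :: "complex \<Rightarrow> complex \<Rightarrow> real" where
  "hdist z w = arcosh (1 + 2 * (cmod (z - w))\<^sup>2 / ((1 - (cmod z)\<^sup>2) * (1 - (cmod w)\<^sup>2)))"

definition geodesic_line :: "complex set \<Rightarrow> bool" where
  "geodesic_line \<xi> \<longleftrightarrow>
     (\<exists>\<gamma>::real \<Rightarrow> complex. (\<forall>s. \<gamma> s \<in> hdisk) \<and>
        (\<forall>s t. hdist (\<gamma> s) (\<gamma> t) = \<bar>s - t\<bar>) \<and> \<xi> = range \<gamma>)"

definition h_isometry :: "(complex \<Rightarrow> complex) \<Rightarrow> bool" where
  "h_isometry f \<longleftrightarrow> f \<in> hdisk \<rightarrow>\<^sub>E hdisk \<and>
     (\<forall>z\<in>hdisk. \<forall>w\<in>hdisk. hdist (f z) (f w) = hdist z w)"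

definition h_id :: "complex \<Rightarrow> complex" where
  "h_id = restrict id hdisk"

definition geodesic_through :: "complex \<Rightarrow> complex \<Rightarrow> complex set" where
  "geodesic_through a b = (THE \<xi>. geodesic_line \<xi> \<and> a \<in> \<xi> \<and> b \<in> \<xi>)"

definition reflection_in :: "complex set \<Rightarrow> (complex \<Rightarrow> complex)" where
  "reflection_in \<xi> = (THE f. h_isometry f \<and> (\<forall>x\<in>\<xi>. f x = x) \<and> f \<noteq> h_id)"

text \<open>Gamma_{n,m} is defined: n \<ge> 3, m \<ge> 4 even, and a regular hyperbolic n-gon with
  interior angles 2 pi / m exists, i.e. n * 2pi/m < (n-2) pi, i.e. 1/n + 1/m < 1/2.\<close>
definition gamma_defined :: "nat \<Rightarrow> nat \<Rightarrow> bool" where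
  "gamma_defined n m \<longleftrightarrow> n \<ge> 3 \<and> m \<ge> 4 \<and> even m \<and> 1 / real n + 1 / real m < 1 / 2"

text \<open>Hyperbolic circumradius R of the regular n-gon with interior angle 2pi/m:
  cosh R = cot(pi/n) cot(pi/m) (right triangle centre / vertex / side midpoint).\<close>
definition circumradius :: "nat \<Rightarrow> nat \<Rightarrow> real" where
  "circumradius n m = arcosh (cot (pi / real n) * cot (pi / real m))"

text \<open>Vertices of \<Delta>_{n,m}, centred at the origin of the disk (Euclidean radius tanh(R/2)).\<close>
definition vertex :: "nat \<Rightarrow> nat \<Rightarrow> nat \<Rightarrow> complex" where
  "vertex n m k = complex_of_real (tanh (circumradius n m / 2)) * cis (2 * pi * real k / real n)"

text \<open>Reflection r_i (i = 0..n-1) in the i-th side, joining vertex i and vertex i+1.\<close>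
definition refl :: "nat \<Rightarrow> nat \<Rightarrow> nat \<Rightarrow> (complex \<Rightarrow> complex)" where
  "refl n m i = reflection_in (geodesic_through (vertex n m i) (vertex n m (Suc i)))"

definition word_elt :: "nat \<Rightarrow> nat \<Rightarrow> nat list \<Rightarrow> (complex \<Rightarrow> complex)" where
  "word_elt n m w = restrict (foldr (\<lambda>i f. refl n m i \<circ> f) w id) hdisk"

definition Gamma :: "nat \<Rightarrow> nat \<Rightarrow> (complex \<Rightarrow> complex) set" where
  "Gamma n m = word_elt n m ` lists {..<n}"

definition word_length :: "nat \<Rightarrow> nat \<Rightarrow> (complex \<Rightarrow> complex) \<Rightarrow> nat" where
  "word_length n m g = (LEAST l. \<exists>w\<in>lists {..<n}. length w = l \<and> word_elt n m w = g)"

definition gmult :: "(complex \<Rightarrow> complex) \<Rightarrow> (complex \<Rightarrow> complex) \<Rightarrow> (complex \<Rightarrow> complex)" where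
  "gmult g h = restrict (g \<circ> h) hdisk"

definition ginv :: "(complex \<Rightarrow> complex) \<Rightarrow> (complex \<Rightarrow> complex)" where
  "ginv g = restrict (inv_into hdisk g) hdisk"

definition gpow :: "(complex \<Rightarrow> complex) \<Rightarrow> nat \<Rightarrow> (complex \<Rightarrow> complex)" where
  "gpow g k = restrict (g ^^ k) hdisk"

definition trivial_stabilizer :: "nat \<Rightarrow> nat \<Rightarrow> complex \<Rightarrow> bool" where
  "trivial_stabilizer n m x0 \<longleftrightarrow> x0 \<in> hdisk \<and> (\<forall>h\<in>Gamma n m. h x0 = x0 \<longrightarrow> h = h_id)"

definition geom_dist :: "complex \<Rightarrow> (complex \<Rightarrow> complex) \<Rightarrow> (complex \<Rightarrow> complex) \<Rightarrow> real" where
  "geom_dist x0 g h = hdist (g x0) (h x0)"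

text \<open>Random walk with i.i.d. steps of law mu (on generator indices): X_k = word_elt of the
  first k steps. First-entrance function F_mu(x,y) = P(exists k. X_k = x^{-1} y).\<close>
definition first_entrance ::
  "nat \<Rightarrow> nat \<Rightarrow> nat pmf \<Rightarrow> (complex \<Rightarrow> complex) \<Rightarrow> (complex \<Rightarrow> complex) \<Rightarrow> real" where
  "first_entrance n m \<mu> x y =
     measure (stream_space (measure_pmf \<mu>))
       {\<omega> \<in> space (stream_space (measure_pmf \<mu>)). \<exists>k. word_elt n m (stake k \<omega>) = gmult (ginv x) y}"

definition green_dist ::
  "nat \<Rightarrow> nat \<Rightarrow> nat pmf \<Rightarrow> (complex \<Rightarrow> complex) \<Rightarrow> (complex \<Rightarrow> complex) \<Rightarrow> real" where
  "green_dist n m \<mu> x y = - ln (first_entrance n m \<mu> x y)"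

end

theory Submission
  imports Defs
begin

text \<open>
  Writing \<open>g = s\<^sub>1\<cdots>s\<^sub>l\<close>, the random walk follows the word \<open>w\<^sup>k\<close> for \<open>g\<^sup>k\<close> with
  probability \<open>(\<Prod>\<^sub>j \<mu>(s\<^sub>j))\<^sup>k\<close>, so the Green distance to \<open>g\<^sup>k\<close> is at most \<open>k c\<close> with
  \<open>c = -\<Sum>\<^sub>j log \<mu>(s\<^sub>j)\<close>. On the other hand \<open>g\<close> translates its axis \<open>\<xi>\<close> by \<open>L\<close>, so
  \<open>d(x, g\<^sup>k x) = k L\<close> for \<open>x \<in> \<xi>\<close>, and by the triangle inequality the geometric distance to
  \<open>g\<^sup>k\<close> is at least \<open>k L - 2 d(x, x\<^sub>0)\<close>. Since \<open>L > c\<close>, the difference grows linearly in \<open>k\<close>.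

  The hyperbolic geometry behind this (the generators are isometries, and an isometry with
  constant displacement along a geodesic translates it) becomes linear algebra in the hyperboloid
  model: distances are \<open>arcosh\<close> of the Minkowski form, geodesics are plane sections, and an
  isometry fixing two points moves every point along the Minkowski normal of their plane.
\<close>

section \<open>The hyperboloid model\<close>

type_synonym lvec = "real \<times> real \<times> real"

definition minner :: "lvec \<Rightarrow> lvec \<Rightarrow> real" where
  "minner X Y = - (fst X * fst Y) + fst (snd X) * fst (snd Y) + snd (snd X) * snd (snd Y)"

definition mcross :: "lvec \<Rightarrow> lvec \<Rightarrow> lvec" where
  "mcross X Y = (snd (snd X) * fst (snd Y) - fst (snd X) * snd (snd Y),
                 snd (snd X) * fst Y - fst X * snd (snd Y),
                 fst X * fst (snd Y) - fst (snd X) * fst Y)"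

definition hyperboloid :: "lvec \<Rightarrow> bool" where
  "hyperboloid X \<longleftrightarrow> minner X X = -1 \<and> fst X > 0"

lemma minner_Pair: "minner (a, b, c) (d, e, f) = - (a * d) + b * e + c * f"
  by (simp add: minner_def)

lemma minner_commute: "minner X Y = minner Y X"
  by (simp add: minner_def algebra_simps)

lemma minner_add_left: "minner (X + Y) Z = minner X Z + minner Y Z"
  and minner_add_right: "minner Z (X + Y) = minner Z X + minner Z Y"
  and minner_diff_left: "minner (X - Y) Z = minner X Z - minner Y Z"
  and minner_diff_right: "minner Z (X - Y) = minner Z X - minner Z Y"
  and minner_scaleR_left: "minner (a *\<^sub>R X) Z = a * minner X Z"
  and minner_scaleR_right: "minner Z (a *\<^sub>R X) = a * minner Z X"
  by (simp_all add: minner_def algebra_simps)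

lemmas minner_linear = minner_add_left minner_add_right minner_diff_left minner_diff_right
  minner_scaleR_left minner_scaleR_right

lemma minner_mcross_self: "minner (mcross A B) (mcross A B) = (minner A B)\<^sup>2 - minner A A * minner B B"
  by (cases A; cases B) (simp add: minner_def mcross_def power2_eq_square algebra_simps)

lemma minner_mcross_orth:
  "minner A (mcross A B) = 0" "minner B (mcross A B) = 0"
  "minner (mcross A B) A = 0" "minner (mcross A B) B = 0"
  by (cases A; cases B; simp add: minner_def mcross_def algebra_simps)+

lemma mcross_combination:
  "mcross (a *\<^sub>R p + b *\<^sub>R v) (c *\<^sub>R p + d *\<^sub>R v) = (a * d - b * c) *\<^sub>R mcross p v"
  by (cases p; cases v) (simp add: mcross_def algebra_simps)

text \<open>The Minkowski orthogonal complement of \<open>A, B\<close> is spanned by \<open>mcross A B\<close>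
  (and \<open>mcross A B = 0\<close> when \<open>A, B\<close> are dependent).\<close>

lemma minner_orth_mcross:
  assumes "minner Y A = 0" "minner Y B = 0"
  shows "minner (mcross A B) (mcross A B) *\<^sub>R Y = minner Y (mcross A B) *\<^sub>R mcross A B"
proof -
  obtain a0 a1 a2 where A: "A = (a0, a1, a2)" by (cases A) auto
  obtain b0 b1 b2 where B: "B = (b0, b1, b2)" by (cases B) auto
  obtain y0 y1 y2 where Y: "Y = (y0, y1, y2)" by (cases Y) auto
  have "- y0 * a0 + y1 * a1 + y2 * a2 = 0" "- y0 * b0 + y1 * b1 + y2 * b2 = 0"
    using assms by (simp_all add: A B Y minner_def)
  then show ?thesis
    unfolding A B Y minner_def mcross_def by simp (intro conjI; algebra)
qed

lemma spacelike_identity: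
  fixes y0 y1 y2 p0 p1 p2 :: real
  assumes "p0\<^sup>2 = 1 + p1\<^sup>2 + p2\<^sup>2" "y0 * p0 = y1 * p1 + y2 * p2"
  shows "p0\<^sup>2 * (y1\<^sup>2 + y2\<^sup>2 - y0\<^sup>2) = (y1\<^sup>2 + y2\<^sup>2) + (y1 * p2 - y2 * p1)\<^sup>2"
proof -
  have "p0\<^sup>2 * y0\<^sup>2 = (y1 * p1 + y2 * p2)\<^sup>2"
    using assms(2) by (metis power_mult_distrib mult.commute)
  have "p0\<^sup>2 * (y1\<^sup>2 + y2\<^sup>2 - y0\<^sup>2) = (1 + p1\<^sup>2 + p2\<^sup>2) * (y1\<^sup>2 + y2\<^sup>2) - (y1 * p1 + y2 * p2)\<^sup>2"
    using assms(1) \<open>p0\<^sup>2 * y0\<^sup>2 = _\<close> by (simp add: algebra_simps)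
  also have "\<dots> = (y1\<^sup>2 + y2\<^sup>2) + (y1 * p2 - y2 * p1)\<^sup>2"
    by (simp add: algebra_simps power2_eq_square)
  finally show ?thesis .
qed

lemma orth_timelike_spacelike:
  assumes "minner P P = -1" "minner Y P = 0"
  shows "minner Y Y \<ge> 0" and "Y \<noteq> 0 \<Longrightarrow> minner Y Y > 0"
proof -
  obtain p0 p1 p2 where P: "P = (p0, p1, p2)" by (cases P) auto
  obtain y0 y1 y2 where Y: "Y = (y0, y1, y2)" by (cases Y) auto
  have h1: "p0\<^sup>2 = 1 + p1\<^sup>2 + p2\<^sup>2" using assms(1) by (simp add: P minner_def power2_eq_square)
  have h2: "y0 * p0 = y1 * p1 + y2 * p2" using assms(2) by (simp add: P Y minner_def)
  note e = spacelike_identity[OF h1 h2]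
  have sq: "p1\<^sup>2 \<ge> 0" "p2\<^sup>2 \<ge> 0" "y1\<^sup>2 \<ge> 0" "y2\<^sup>2 \<ge> 0" "(y1 * p2 - y2 * p1)\<^sup>2 \<ge> 0" by simp_all
  have p0: "p0\<^sup>2 > 0" using h1 sq by linarith
  have YY: "minner Y Y = y1\<^sup>2 + y2\<^sup>2 - y0\<^sup>2" by (simp add: Y minner_def power2_eq_square)
  have "p0\<^sup>2 * (y1\<^sup>2 + y2\<^sup>2 - y0\<^sup>2) \<ge> 0" using e sq by linarith
  then show "minner Y Y \<ge> 0" using YY p0 by (simp add: zero_le_mult_iff)
  show "minner Y Y > 0" if "Y \<noteq> 0"
  proof (rule ccontr)
    assume "\<not> minner Y Y > 0"
    then have "p0\<^sup>2 * (y1\<^sup>2 + y2\<^sup>2 - y0\<^sup>2) \<le> 0" using YY p0 by (simp add: mult_le_0_iff)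
    then have "y1\<^sup>2 = 0" "y2\<^sup>2 = 0" using e sq by linarith+
    then have "y1 = 0" "y2 = 0" by simp_all
    moreover from this have "y0 = 0" using h2 p0 by simp
    ultimately show False using that by (simp add: Y zero_prod_def)
  qed
qed

lemma cauchy_schwarz_orth_timelike:
  assumes "minner P P = -1" "minner U P = 0" "minner W P = 0"
  shows "(minner U W)\<^sup>2 \<le> minner U U * minner W W"
proof (cases "W = 0")
  case True
  then show ?thesis by (simp add: minner_def zero_prod_def)
next
  case False
  have W: "minner W W > 0" using orth_timelike_spacelike(2)[OF assms(1,3) False] .
  define t where "t = minner U W / minner W W"
  have "minner (U - t *\<^sub>R W) P = 0" using assms by (simp add: minner_linear)
  then have "minner (U - t *\<^sub>R W) (U - t *\<^sub>R W) \<ge> 0" using orth_timelike_spacelike(1)[OF assms(1)] by blast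
  also have "minner (U - t *\<^sub>R W) (U - t *\<^sub>R W) = minner U U - (minner U W)\<^sup>2 / minner W W"
    using W by (simp add: minner_linear t_def minner_commute[of W U] power2_eq_square field_simps)
  finally show ?thesis using W by (simp add: field_simps)
qed

lemma lagrange_identity_2:
  fixes x1 x2 p1 p2 :: real
  shows "(x1 * p1 + x2 * p2)\<^sup>2 + (x1 * p2 - x2 * p1)\<^sup>2 = (x1\<^sup>2 + x2\<^sup>2) * (p1\<^sup>2 + p2\<^sup>2)"
  by (simp add: power2_eq_square algebra_simps)

lemma hyperboloid_time:
  assumes "hyperboloid X"
  shows "fst X \<ge> 1" "(fst X)\<^sup>2 = 1 + (fst (snd X))\<^sup>2 + (snd (snd X))\<^sup>2"
proof -
  obtain x0 x1 x2 where X: "X = (x0, x1, x2)" by (cases X) auto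
  have h: "x0\<^sup>2 = 1 + x1\<^sup>2 + x2\<^sup>2" "x0 > 0"
    using assms by (auto simp: hyperboloid_def X minner_def power2_eq_square)
  then have "1\<^sup>2 \<le> x0\<^sup>2" by simp
  then have "1 \<le> x0" by (rule power2_le_imp_le) (use h in auto)
  then show "fst X \<ge> 1" by (simp add: X)
  show "(fst X)\<^sup>2 = 1 + (fst (snd X))\<^sup>2 + (snd (snd X))\<^sup>2" using h by (simp add: X)
qed

lemma upper_sheet_iff:
  assumes "minner X X = -1" "hyperboloid P"
  shows "fst X > 0 \<longleftrightarrow> minner X P < 0"
proof -
  obtain p0 p1 p2 where P: "P = (p0, p1, p2)" by (cases P) auto
  obtain x0 x1 x2 where X: "X = (x0, x1, x2)" by (cases X) auto
  have h1: "p0\<^sup>2 = 1 + p1\<^sup>2 + p2\<^sup>2" "p0 > 0"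
    using assms(2) by (auto simp: hyperboloid_def P minner_def power2_eq_square)
  have h2: "x0\<^sup>2 = 1 + x1\<^sup>2 + x2\<^sup>2" using assms(1) by (simp add: X minner_def power2_eq_square)
  have sq: "p1\<^sup>2 \<ge> 0" "p2\<^sup>2 \<ge> 0" "x1\<^sup>2 \<ge> 0" "x2\<^sup>2 \<ge> 0" "(x1 * p2 - x2 * p1)\<^sup>2 \<ge> 0" by simp_all
  have "(x1 * p1 + x2 * p2)\<^sup>2 \<le> (x1\<^sup>2 + x2\<^sup>2) * (p1\<^sup>2 + p2\<^sup>2)"
    using lagrange_identity_2[of x1 p1 x2 p2] sq by linarith
  also have "\<dots> = (x0 * p0)\<^sup>2 - x0\<^sup>2 - p0\<^sup>2 + 1"
    using h1 h2 by (simp add: algebra_simps power_mult_distrib)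
  also have "\<dots> < (x0 * p0)\<^sup>2" using h1 h2 sq by linarith
  finally have "\<bar>x1 * p1 + x2 * p2\<bar> < \<bar>x0 * p0\<bar>"
    by (metis abs_ge_zero power2_abs power_less_imp_less_base)
  moreover have "minner X P = - (x0 * p0) + (x1 * p1 + x2 * p2)" by (simp add: X P minner_def)
  moreover have "x0\<^sup>2 \<ge> 1" using h2 sq by linarith
  ultimately show ?thesis using h1 by (cases "x0 > 0") (auto simp: X abs_mult)
qed

lemma reverse_cauchy_schwarz:
  assumes "hyperboloid X" "hyperboloid P"
  shows "- minner X P \<ge> 1" and "- minner X P = 1 \<Longrightarrow> X = P"
proof -
  obtain p0 p1 p2 where P: "P = (p0, p1, p2)" by (cases P) auto
  obtain x0 x1 x2 where X: "X = (x0, x1, x2)" by (cases X) auto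
  have h1: "p0\<^sup>2 = 1 + p1\<^sup>2 + p2\<^sup>2" "p0 \<ge> 1" using hyperboloid_time[OF assms(2)] by (auto simp: P)
  have h2: "x0\<^sup>2 = 1 + x1\<^sup>2 + x2\<^sup>2" "x0 \<ge> 1" using hyperboloid_time[OF assms(1)] by (auto simp: X)
  define t where "t = x1 * p1 + x2 * p2"
  have sq: "(x1 * p2 - x2 * p1)\<^sup>2 \<ge> 0" "(x0 - p0)\<^sup>2 \<ge> 0" by simp_all
  have "t\<^sup>2 \<le> (x1\<^sup>2 + x2\<^sup>2) * (p1\<^sup>2 + p2\<^sup>2)"
    using lagrange_identity_2[of x1 p1 x2 p2] sq unfolding t_def by linarith
  also have "\<dots> = (x0\<^sup>2 - 1) * (p0\<^sup>2 - 1)" using h1 h2 by simp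
  finally have tle: "t\<^sup>2 \<le> (x0\<^sup>2 - 1) * (p0\<^sup>2 - 1)" .
  have id: "(x0 * p0 - 1)\<^sup>2 = (x0\<^sup>2 - 1) * (p0\<^sup>2 - 1) + (x0 - p0)\<^sup>2"
    by (simp add: algebra_simps power2_eq_square)
  have x0p0: "x0 * p0 \<ge> 1" using h1 h2 by (metis mult_mono mult_1 zero_le_one order_trans)
  have "t\<^sup>2 \<le> (x0 * p0 - 1)\<^sup>2" using tle id sq by linarith
  then have "\<bar>t\<bar> \<le> x0 * p0 - 1"
    using x0p0 by (metis abs_ge_zero power2_abs power2_le_imp_le diff_ge_0_iff_ge)
  moreover have XP: "minner X P = - (x0 * p0) + t" by (simp add: X P minner_def t_def)
  ultimately show "- minner X P \<ge> 1" by linarith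
  assume "- minner X P = 1"
  then have t: "t = x0 * p0 - 1" using XP by linarith
  then have "(x0 - p0)\<^sup>2 \<le> 0" using tle id by simp
  then have "x0 = p0" by simp
  have "(x1 - p1)\<^sup>2 + (x2 - p2)\<^sup>2 = (x1\<^sup>2 + x2\<^sup>2) + (p1\<^sup>2 + p2\<^sup>2) - 2 * t"
    by (simp add: t_def power2_eq_square algebra_simps)
  also have "\<dots> = 0" using h1 h2 t \<open>x0 = p0\<close> by (simp add: power2_eq_square)
  finally have "x1 = p1 \<and> x2 = p2" by (simp add: add_nonneg_eq_0_iff)
  then show "X = P" using \<open>x0 = p0\<close> by (simp add: X P)
qed

lemma reverse_cauchy_schwarz_strict:
  assumes "hyperboloid X" "hyperboloid Y" "X \<noteq> Y"
  shows "- minner X Y > 1"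
  using reverse_cauchy_schwarz[OF assms(1,2)] assms(3) by fastforce

lemma hyperboloid_triangle:
  assumes "hyperboloid X" "hyperboloid Y" "hyperboloid Z"
  shows "arcosh (- minner X Z) \<le> arcosh (- minner X Y) + arcosh (- minner Y Z)"
proof -
  define \<alpha> where "\<alpha> = - minner X Y"
  define \<beta> where "\<beta> = - minner Y Z"
  have a1: "\<alpha> \<ge> 1" using reverse_cauchy_schwarz(1)[OF assms(1,2)] by (simp add: \<alpha>_def)
  have b1: "\<beta> \<ge> 1" using reverse_cauchy_schwarz(1)[OF assms(2,3)] by (simp add: \<beta>_def)
  have XX: "minner X X = -1" and YY: "minner Y Y = -1" and ZZ: "minner Z Z = -1"
    using assms by (simp_all add: hyperboloid_def)
  define X' where "X' = X - \<alpha> *\<^sub>R Y"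
  define Z' where "Z' = Z - \<beta> *\<^sub>R Y"
  have "minner X' Y = 0" using YY by (simp add: X'_def minner_linear \<alpha>_def)
  moreover have "minner Z' Y = 0" using YY by (simp add: Z'_def minner_linear \<beta>_def minner_commute[of Z Y])
  moreover have "minner X' X' = \<alpha>\<^sup>2 - 1"
    using YY XX by (simp add: X'_def minner_linear \<alpha>_def minner_commute[of Y X] power2_eq_square)
  moreover have "minner Z' Z' = \<beta>\<^sup>2 - 1"
    using YY ZZ by (simp add: Z'_def minner_linear \<beta>_def minner_commute[of Z Y] power2_eq_square)
  ultimately have "(minner X' Z')\<^sup>2 \<le> (\<alpha>\<^sup>2 - 1) * (\<beta>\<^sup>2 - 1)"
    using cauchy_schwarz_orth_timelike[OF YY] by metis
  then have "\<bar>minner X' Z'\<bar> \<le> sqrt (\<alpha>\<^sup>2 - 1) * sqrt (\<beta>\<^sup>2 - 1)"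
    by (metis real_sqrt_abs real_sqrt_le_mono real_sqrt_mult)
  moreover have "- minner X Z = \<alpha> * \<beta> - minner X' Z'" using YY
    by (simp add: X'_def Z'_def minner_linear \<alpha>_def \<beta>_def minner_commute[of Y X]
        minner_commute[of Z Y] algebra_simps)
  ultimately have "- minner X Z \<le> cosh (arcosh \<alpha> + arcosh \<beta>)"
    using a1 b1 by (simp add: cosh_add sinh_arcosh_real)
  moreover have "- minner X Z \<ge> 1" using reverse_cauchy_schwarz(1)[OF assms(1,3)] .
  ultimately have "arcosh (- minner X Z) \<le> arcosh (cosh (arcosh \<alpha> + arcosh \<beta>))"
    by (metis arcosh_less_iff_real cosh_real_ge_1 not_le)
  also have "\<dots> = arcosh \<alpha> + arcosh \<beta>"
    using a1 b1 by (intro arcosh_cosh_real) simp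
  finally show ?thesis by (simp add: \<alpha>_def \<beta>_def)
qed

text \<open>\<open>to_disk\<close> is the stereographic projection from \<open>(-1, 0, 0)\<close> and \<open>to_hyp\<close> its inverse.\<close>

definition to_hyp :: "complex \<Rightarrow> lvec" where
  "to_hyp z = ((1 + (cmod z)\<^sup>2) / (1 - (cmod z)\<^sup>2), 2 * Re z / (1 - (cmod z)\<^sup>2), 2 * Im z / (1 - (cmod z)\<^sup>2))"

definition to_disk :: "lvec \<Rightarrow> complex" where
  "to_disk X = Complex (fst (snd X) / (1 + fst X)) (snd (snd X) / (1 + fst X))"

lemma mem_hdisk: "z \<in> hdisk \<longleftrightarrow> cmod z < 1"
  by (simp add: hdisk_def)

lemma to_hyp_eq_scaleR:
  "to_hyp z = (1 / (1 - ((Re z)\<^sup>2 + (Im z)\<^sup>2))) *\<^sub>R (1 + ((Re z)\<^sup>2 + (Im z)\<^sup>2), 2 * Re z, 2 * Im z)"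
  by (simp add: to_hyp_def cmod_power2)

lemma Re_Im_sq_less_1: "z \<in> hdisk \<Longrightarrow> (Re z)\<^sup>2 + (Im z)\<^sup>2 < 1"
  by (metis mem_hdisk cmod_power2 norm_ge_zero power_strict_mono one_power2 zero_less_numeral)

lemma hyperboloid_to_hyp:
  assumes "z \<in> hdisk"
  shows "hyperboloid (to_hyp z)"
proof -
  define r where "r = (Re z)\<^sup>2 + (Im z)\<^sup>2"
  have r: "r < 1" using Re_Im_sq_less_1[OF assms] by (simp add: r_def)
  have "minner (1 + r, 2 * Re z, 2 * Im z) (1 + r, 2 * Re z, 2 * Im z) = - ((1 - r) * (1 - r))"
    by (simp add: minner_def r_def power2_eq_square algebra_simps)
  then have "minner (to_hyp z) (to_hyp z) = -1"
    unfolding to_hyp_eq_scaleR r_def[symmetric] minner_scaleR_left minner_scaleR_right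
    using r by (simp add: divide_eq_minus_1_iff)
  moreover have "fst (to_hyp z) > 0"
    unfolding to_hyp_eq_scaleR r_def[symmetric] using r by (simp add: r_def add_pos_nonneg)
  ultimately show ?thesis by (simp add: hyperboloid_def)
qed

lemma minner_to_hyp:
  assumes "z \<in> hdisk" "w \<in> hdisk"
  shows "- minner (to_hyp z) (to_hyp w) = 1 + 2 * (cmod (z - w))\<^sup>2 / ((1 - (cmod z)\<^sup>2) * (1 - (cmod w)\<^sup>2))"
proof -
  define a b c d where "a = Re z" "b = Im z" "c = Re w" "d = Im w"
  define r s where "r = a\<^sup>2 + b\<^sup>2" "s = c\<^sup>2 + d\<^sup>2"
  have "r < 1" "s < 1"
    using Re_Im_sq_less_1[OF assms(1)] Re_Im_sq_less_1[OF assms(2)] by (simp_all add: r_s_def a_b_c_d_def)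
  then have nz: "1 - r \<noteq> 0" "1 - s \<noteq> 0" by simp_all
  have "minner (to_hyp z) (to_hyp w) = (1 / (1 - r)) * ((1 / (1 - s)) * (- ((1 + r) * (1 + s)) + 4 * (a * c + b * d)))"
    unfolding to_hyp_eq_scaleR a_b_c_d_def[symmetric] r_s_def[symmetric] minner_scaleR_left minner_scaleR_right
    by (simp only: minner_Pair mult.left_commute) (simp add: algebra_simps)
  then have "- minner (to_hyp z) (to_hyp w) = (1 / (1 - r)) * ((1 / (1 - s)) * ((1 + r) * (1 + s) - 4 * (a * c + b * d)))"
    by (simp add: algebra_simps)
  also have "\<dots> = ((1 + r) * (1 + s) - 4 * (a * c + b * d)) / ((1 - r) * (1 - s))"
    by simp
  also have "\<dots> = ((1 - r) * (1 - s) + 2 * ((a - c)\<^sup>2 + (b - d)\<^sup>2)) / ((1 - r) * (1 - s))"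
    by (rule arg_cong[where f="\<lambda>x. x / _"]) (simp add: r_s_def power2_eq_square algebra_simps)
  also have "\<dots> = 1 + 2 * ((a - c)\<^sup>2 + (b - d)\<^sup>2) / ((1 - r) * (1 - s))"
    using nz by (simp add: add_divide_distrib)
  finally show ?thesis by (simp add: cmod_power2 r_s_def a_b_c_d_def)
qed

lemma hdist_eq_arcosh_minner:
  "z \<in> hdisk \<Longrightarrow> w \<in> hdisk \<Longrightarrow> hdist z w = arcosh (- minner (to_hyp z) (to_hyp w))"
  by (simp add: hdist_def minner_to_hyp)

lemma to_disk_to_hyp:
  assumes "z \<in> hdisk"
  shows "to_disk (to_hyp z) = z"
proof -
  define r where "r = (Re z)\<^sup>2 + (Im z)\<^sup>2"
  have r: "r < 1" using Re_Im_sq_less_1[OF assms] by (simp add: r_def)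
  then have "1 + (1 + r) / (1 - r) = 2 / (1 - r)" by (simp add: field_simps)
  then show ?thesis using r unfolding to_disk_def to_hyp_eq_scaleR
    by (simp add: r_def[symmetric] complex_eq_iff)
qed

lemma to_hyp_inj: "z \<in> hdisk \<Longrightarrow> w \<in> hdisk \<Longrightarrow> to_hyp z = to_hyp w \<Longrightarrow> z = w"
  by (metis to_disk_to_hyp)

lemma to_disk_in_hdisk: "hyperboloid X \<Longrightarrow> to_disk X \<in> hdisk"
  and to_hyp_to_disk: "hyperboloid X \<Longrightarrow> to_hyp (to_disk X) = X"
proof -
  assume "hyperboloid X"
  obtain x0 x1 x2 where X: "X = (x0, x1, x2)" by (cases X) auto
  have h: "x0\<^sup>2 = 1 + x1\<^sup>2 + x2\<^sup>2" "x0 \<ge> 1" using hyperboloid_time[OF \<open>hyperboloid X\<close>] by (auto simp: X)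
  have r: "(Re (to_disk X))\<^sup>2 + (Im (to_disk X))\<^sup>2 = (x0 - 1) / (x0 + 1)"
  proof -
    have "(Re (to_disk X))\<^sup>2 + (Im (to_disk X))\<^sup>2 = (x0\<^sup>2 - 1) / (1 + x0)\<^sup>2"
      using h by (simp add: to_disk_def X power_divide add_divide_distrib)
    also have "\<dots> = ((x0 - 1) * (x0 + 1)) / ((x0 + 1) * (x0 + 1))"
      by (simp add: power2_eq_square algebra_simps)
    also have "\<dots> = (x0 - 1) / (x0 + 1)"
      using h(2) by (intro nonzero_mult_divide_mult_cancel_right) simp
    finally show ?thesis .
  qed
  have "(x0 - 1) / (x0 + 1) < 1" using h by simp
  then show "to_disk X \<in> hdisk" using r
    by (metis mem_hdisk cmod_power2 norm_ge_zero power_less_imp_less_base zero_le_one one_power2)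
  have d: "1 - (x0 - 1) / (x0 + 1) = 2 / (x0 + 1)" "1 + (x0 - 1) / (x0 + 1) = 2 * x0 / (x0 + 1)"
    using h by (simp_all add: field_simps)
  have "to_hyp (to_disk X) = ((x0 + 1) / 2) *\<^sub>R (2 * x0 / (x0 + 1), 2 * (x1 / (1 + x0)), 2 * (x2 / (1 + x0)))"
    by (simp only: to_hyp_eq_scaleR r d) (simp add: to_disk_def X)
  also have "\<dots> = X" using h by (simp add: X field_simps)
  finally show "to_hyp (to_disk X) = X" .
qed

lemma minner_eq_cosh_hdist:
  assumes "z \<in> hdisk" "w \<in> hdisk"
  shows "- minner (to_hyp z) (to_hyp w) = cosh (hdist z w)"
  using reverse_cauchy_schwarz(1)[OF hyperboloid_to_hyp hyperboloid_to_hyp] assms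
  by (simp add: hdist_eq_arcosh_minner)

lemma hdist_commute: "hdist z w = hdist w z"
  by (simp add: hdist_def norm_minus_commute mult.commute)

lemma hdist_triangle:
  assumes "a \<in> hdisk" "b \<in> hdisk" "c \<in> hdisk"
  shows "hdist a c \<le> hdist a b + hdist b c"
  using hyperboloid_triangle[OF hyperboloid_to_hyp hyperboloid_to_hyp hyperboloid_to_hyp] assms
  by (simp add: hdist_eq_arcosh_minner)

section \<open>Geodesics\<close>

definition line_frame :: "lvec \<Rightarrow> lvec \<Rightarrow> bool" where
  "line_frame p v \<longleftrightarrow> hyperboloid p \<and> minner v v = 1 \<and> minner p v = 0"

definition hline :: "lvec \<Rightarrow> lvec \<Rightarrow> real \<Rightarrow> lvec" where
  "hline p v s = cosh s *\<^sub>R p + sinh s *\<^sub>R v"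

lemma line_frameD:
  assumes "line_frame p v"
  shows "minner p p = -1" "minner v v = 1" "minner p v = 0" "minner v p = 0"
  using assms by (auto simp: line_frame_def hyperboloid_def minner_commute)

lemma minner_hline:
  assumes "line_frame p v"
  shows "minner (hline p v s) (hline p v t) = - cosh (s - t)"
  using line_frameD[OF assms] by (simp add: hline_def minner_linear cosh_diff algebra_simps)

lemma minner_hline_base:
  assumes "line_frame p v"
  shows "minner (hline p v s) p = - cosh s"
  using line_frameD[OF assms] by (simp add: hline_def minner_linear)

lemma hyperboloid_hline:
  assumes "line_frame p v"
  shows "hyperboloid (hline p v s)"
proof -
  have X: "minner (hline p v s) (hline p v s) = -1" using minner_hline[OF assms, of s s] by simp
  have "minner (hline p v s) p < 0" using minner_hline_base[OF assms] by (simp add: cosh_real_pos)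
  moreover have "hyperboloid p" using assms by (simp add: line_frame_def)
  ultimately have "fst (hline p v s) > 0" using upper_sheet_iff[OF X] by blast
  then show ?thesis using X by (simp add: hyperboloid_def)
qed

lemma line_frame_through:
  assumes p: "hyperboloid p" and q: "hyperboloid q" and pq: "minner p q = - cosh d" and "d \<noteq> 0"
  defines "v \<equiv> (1 / sinh d) *\<^sub>R (q - cosh d *\<^sub>R p)"
  shows "line_frame p v" "hline p v d = q"
proof -
  have sh: "sinh d \<noteq> 0" using \<open>d \<noteq> 0\<close> by simp
  have pp: "minner p p = -1" and qq: "minner q q = -1" using p q by (simp_all add: hyperboloid_def)
  have "minner p v = 0" using pp pq by (simp add: v_def minner_linear)
  moreover have "minner v v = 1"
  proof -
    have "minner v v = (1 / sinh d)\<^sup>2 * ((cosh d)\<^sup>2 - 1)"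
      using pp qq pq
      by (simp add: v_def minner_linear minner_commute[of q p] power2_eq_square algebra_simps)
        (simp add: add_divide_distrib[symmetric])
    then show ?thesis using sh by (simp add: cosh_square_eq power_divide)
  qed
  ultimately show "line_frame p v" using p by (simp add: line_frame_def)
  show "hline p v d = q" using sh by (simp add: hline_def v_def)
qed

lemma isometric_curve_is_hline:
  fixes P :: "real \<Rightarrow> lvec"
  assumes P: "\<And>s t. minner (P s) (P t) = - cosh (s - t)" and P0: "hyperboloid (P 0)"
  shows "\<exists>p v. line_frame p v \<and> (\<forall>s. P s = hline p v s)"
proof -
  define p where "p = P 0"
  have "minner (P 1) (P 1) = -1" "minner (P 1) (P 0) < 0" using P[of 1 1] P[of 1 0] by simp_all
  then have "hyperboloid (P 1)" using upper_sheet_iff[OF _ P0] by (simp add: hyperboloid_def)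
  moreover have "minner p (P 1) = - cosh 1" using P[of 0 1] by (simp add: p_def)
  ultimately obtain v where fr: "line_frame p v" and v: "hline p v 1 = P 1"
    using line_frame_through[of p "P 1" 1] P0 by (auto simp: p_def)
  note frD = line_frameD[OF fr]
  have "P s = hline p v s" for s
  proof -
    have "sinh 1 * minner (P s) v = minner (P s) (P 1) - cosh 1 * minner (P s) p"
      unfolding v[symmetric] by (simp add: hline_def minner_linear)
    also have "\<dots> = sinh 1 * sinh s" using P[of s 1] P[of s 0] by (simp add: p_def cosh_diff algebra_simps)
    finally have "minner (P s) v = sinh s" by simp
    moreover have "minner (P s) p = - cosh s" using P[of s 0] by (simp add: p_def)
    ultimately have "minner (P s) (hline p v s) = -1"
      using cosh_square_eq[of s] by (simp add: hline_def minner_linear power2_eq_square)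
    then have "minner (P s - hline p v s) (P s - hline p v s) = 0"
      using P[of s s] minner_hline[OF fr, of s s]
      by (simp add: minner_linear minner_commute[of "hline p v s" "P s"])
    moreover have "minner (P s - hline p v s) p = 0"
      using P[of s 0] minner_hline_base[OF fr, of s] by (simp add: p_def minner_linear)
    ultimately have "P s - hline p v s = 0"
      using orth_timelike_spacelike(2)[OF frD(1)] by (metis less_irrefl)
    then show ?thesis by simp
  qed
  then show ?thesis using fr by blast
qed

lemma plane_point_on_hline:
  assumes fr: "line_frame p v" and X: "hyperboloid X" and "minner X (mcross p v) = 0"
  shows "\<exists>s. X = hline p v s"
proof -
  note frD = line_frameD[OF fr]
  define \<alpha> \<beta> where "\<alpha> = - minner X p" "\<beta> = minner X v"
  define Y where "Y = X - \<alpha> *\<^sub>R p - \<beta> *\<^sub>R v"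
  have "minner Y p = 0" "minner Y v = 0" using frD by (simp_all add: Y_def \<alpha>_\<beta>_def minner_linear)
  moreover have "minner Y (mcross p v) = 0"
    using assms(3) by (simp add: Y_def minner_linear minner_mcross_orth)
  moreover have "minner (mcross p v) (mcross p v) = 1" using frD by (simp add: minner_mcross_self)
  ultimately have "Y = 0" using minner_orth_mcross[of Y p v] by simp
  then have X_eq: "X = \<alpha> *\<^sub>R p + \<beta> *\<^sub>R v" by (simp add: Y_def algebra_simps)
  have "minner X X = -1" using X by (simp add: hyperboloid_def)
  then have "\<alpha>\<^sup>2 = \<beta>\<^sup>2 + 1" unfolding X_eq using frD by (simp add: minner_linear power2_eq_square)
  moreover have "\<alpha> \<ge> 1" using reverse_cauchy_schwarz(1)[OF X] fr by (simp add: line_frame_def \<alpha>_\<beta>_def)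
  ultimately have "\<alpha> = sqrt (\<beta>\<^sup>2 + 1)" by (metis abs_of_nonneg real_sqrt_abs order_trans zero_le_one)
  then have "X = hline p v (arsinh \<beta>)" by (simp add: X_eq hline_def cosh_arsinh_real)
  then show ?thesis ..
qed

lemma geodesic_is_hline:
  assumes "\<forall>s. \<gamma> s \<in> hdisk" "\<forall>s t. hdist (\<gamma> s) (\<gamma> t) = \<bar>s - t\<bar>"
  shows "\<exists>p v. line_frame p v \<and> (\<forall>s. to_hyp (\<gamma> s) = hline p v s)"
proof (rule isometric_curve_is_hline)
  show "minner (to_hyp (\<gamma> s)) (to_hyp (\<gamma> t)) = - cosh (s - t)" for s t
    using minner_eq_cosh_hdist[of "\<gamma> s" "\<gamma> t"] assms by simp
  show "hyperboloid (to_hyp (\<gamma> 0))" using assms hyperboloid_to_hyp by blast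
qed

lemma geodesic_line_hline:
  assumes "line_frame p v"
  shows "geodesic_line (range (\<lambda>s. to_disk (hline p v s)))"
  unfolding geodesic_line_def
proof (intro exI conjI allI)
  fix s t
  show "to_disk (hline p v s) \<in> hdisk" using to_disk_in_hdisk[OF hyperboloid_hline[OF assms]] .
  have "hdist (to_disk (hline p v s)) (to_disk (hline p v t)) = arcosh (cosh \<bar>s - t\<bar>)"
    using hyperboloid_hline[OF assms] minner_hline[OF assms]
    by (simp add: hdist_eq_arcosh_minner to_disk_in_hdisk to_hyp_to_disk)
  then show "hdist (to_disk (hline p v s)) (to_disk (hline p v t)) = \<bar>s - t\<bar>"
    using arcosh_cosh_real[of "\<bar>s - t\<bar>"] by simp
qed simp

definition disk_line :: "complex \<Rightarrow> complex \<Rightarrow> complex set" where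
  "disk_line A B = {z \<in> hdisk. minner (to_hyp z) (mcross (to_hyp A) (to_hyp B)) = 0}"

lemma geodesic_line_eq_disk_line:
  assumes "geodesic_line \<xi>" "A \<in> \<xi>" "B \<in> \<xi>" "A \<noteq> B"
  shows "\<xi> = disk_line A B"
proof -
  obtain \<gamma> where \<gamma>: "\<forall>s. \<gamma> s \<in> hdisk" "\<forall>s t. hdist (\<gamma> s) (\<gamma> t) = \<bar>s - t\<bar>" "\<xi> = range \<gamma>"
    using assms(1) unfolding geodesic_line_def by blast
  obtain p v where fr: "line_frame p v" and p: "\<forall>s. to_hyp (\<gamma> s) = hline p v s"
    using geodesic_is_hline[OF \<gamma>(1,2)] by blast
  obtain a b where ab: "A = \<gamma> a" "B = \<gamma> b" using assms(2,3) \<gamma>(3) by auto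
  have "sinh (b - a) \<noteq> 0" using ab assms(4) by auto
  moreover have "mcross (to_hyp A) (to_hyp B) = sinh (b - a) *\<^sub>R mcross p v"
    using p ab by (simp add: hline_def mcross_combination sinh_diff algebra_simps)
  ultimately have line: "disk_line A B = {z \<in> hdisk. minner (to_hyp z) (mcross p v) = 0}"
    by (auto simp: disk_line_def minner_scaleR_right)
  show ?thesis
  proof (intro set_eqI iffI)
    fix z assume "z \<in> \<xi>"
    then show "z \<in> disk_line A B"
      using \<gamma> p by (auto simp: line hline_def minner_linear minner_mcross_orth)
  next
    fix z assume "z \<in> disk_line A B"
    then obtain s where "z \<in> hdisk" "to_hyp z = hline p v s"
      using plane_point_on_hline[OF fr hyperboloid_to_hyp] by (auto simp: line)
    then have "z = \<gamma> s" using to_hyp_inj[of z "\<gamma> s"] p \<gamma>(1) by simp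
    then show "z \<in> \<xi>" using \<gamma>(3) by simp
  qed
qed

lemma hdist_pos:
  assumes "A \<in> hdisk" "B \<in> hdisk" "A \<noteq> B"
  shows "hdist A B > 0"
proof -
  have "to_hyp A \<noteq> to_hyp B" using assms to_hyp_inj by blast
  then have "- minner (to_hyp A) (to_hyp B) > 1"
    using reverse_cauchy_schwarz_strict[OF hyperboloid_to_hyp hyperboloid_to_hyp] assms by blast
  then show ?thesis by (simp add: hdist_eq_arcosh_minner assms)
qed

lemma geodesic_line_disk_line:
  assumes "A \<in> hdisk" "B \<in> hdisk" "A \<noteq> B"
  shows "geodesic_line (disk_line A B)" "A \<in> disk_line A B" "B \<in> disk_line A B"
proof -
  have "minner (to_hyp A) (to_hyp B) = - cosh (hdist A B)" "hdist A B \<noteq> 0"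
    using minner_eq_cosh_hdist[OF assms(1,2)] hdist_pos[OF assms] by simp_all
  then obtain v where fr: "line_frame (to_hyp A) v" and B: "hline (to_hyp A) v (hdist A B) = to_hyp B"
    using line_frame_through[OF hyperboloid_to_hyp[OF assms(1)] hyperboloid_to_hyp[OF assms(2)]] by blast
  define \<xi> where "\<xi> = range (\<lambda>s. to_disk (hline (to_hyp A) v s))"
  have "A \<in> \<xi>" unfolding \<xi>_def
    by (rule range_eqI[of _ _ 0]) (use assms in \<open>simp add: hline_def to_disk_to_hyp\<close>)
  moreover have "B \<in> \<xi>" unfolding \<xi>_def
    by (rule range_eqI[of _ _ "hdist A B"]) (use assms in \<open>simp add: B to_disk_to_hyp\<close>)
  ultimately have AB: "A \<in> \<xi>" "B \<in> \<xi>" .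
  have geo: "geodesic_line \<xi>" using geodesic_line_hline[OF fr] by (simp add: \<xi>_def)
  then have "\<xi> = disk_line A B" using geodesic_line_eq_disk_line AB assms(3) by blast
  then show "geodesic_line (disk_line A B)" "A \<in> disk_line A B" "B \<in> disk_line A B"
    using geo AB by simp_all
qed

lemma geodesic_through_eq_disk_line:
  assumes "A \<in> hdisk" "B \<in> hdisk" "A \<noteq> B"
  shows "geodesic_through A B = disk_line A B"
  unfolding geodesic_through_def
proof (rule the_equality)
  show "geodesic_line (disk_line A B) \<and> A \<in> disk_line A B \<and> B \<in> disk_line A B"
    using geodesic_line_disk_line[OF assms] by blast
  show "\<xi> = disk_line A B" if "geodesic_line \<xi> \<and> A \<in> \<xi> \<and> B \<in> \<xi>" for \<xi>
    using geodesic_line_eq_disk_line that assms(3) by blast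
qed

section \<open>Reflections in geodesics\<close>

definition lorentz_refl :: "lvec \<Rightarrow> lvec \<Rightarrow> lvec" where
  "lorentz_refl N X = X - (2 * minner X N / minner N N) *\<^sub>R N"

lemma minner_lorentz_refl:
  "minner N N \<noteq> 0 \<Longrightarrow> minner (lorentz_refl N X) (lorentz_refl N Y) = minner X Y"
  by (simp add: lorentz_refl_def minner_linear minner_commute[of N Y] field_simps)

lemma minner_lorentz_refl_orth:
  "minner P N = 0 \<Longrightarrow> minner (lorentz_refl N X) P = minner X P"
  by (simp add: lorentz_refl_def minner_linear minner_commute[of N P])

lemma lorentz_refl_eq_self_iff:
  "minner N N \<noteq> 0 \<Longrightarrow> lorentz_refl N X = X \<longleftrightarrow> minner X N = 0"
  by (auto simp: lorentz_refl_def) (simp add: minner_def)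

lemma hyperboloid_lorentz_refl:
  assumes "minner N N \<noteq> 0" "hyperboloid P" "minner P N = 0" "hyperboloid X"
  shows "hyperboloid (lorentz_refl N X)"
proof -
  have XX: "minner X X = -1" and RR: "minner (lorentz_refl N X) (lorentz_refl N X) = -1"
    using assms(1,4) by (simp_all add: minner_lorentz_refl hyperboloid_def)
  have "minner X P < 0" using upper_sheet_iff[OF XX assms(2)] assms(4) by (simp add: hyperboloid_def)
  then have "minner (lorentz_refl N X) P < 0" using minner_lorentz_refl_orth[OF assms(3)] by simp
  then show ?thesis using upper_sheet_iff[OF RR assms(2)] RR by (simp add: hyperboloid_def)
qed

lemma h_isometry_minner:
  assumes "h_isometry f" "z \<in> hdisk" "w \<in> hdisk"
  shows "minner (to_hyp (f z)) (to_hyp (f w)) = minner (to_hyp z) (to_hyp w)"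
proof -
  have "f z \<in> hdisk" "f w \<in> hdisk" "hdist (f z) (f w) = hdist z w"
    using assms by (auto simp: h_isometry_def)
  then show ?thesis using minner_eq_cosh_hdist assms(2,3) by (metis neg_equal_iff_equal)
qed

definition disk_refl :: "complex \<Rightarrow> complex \<Rightarrow> complex \<Rightarrow> complex" where
  "disk_refl A B = restrict (\<lambda>z. to_disk (lorentz_refl (mcross (to_hyp A) (to_hyp B)) (to_hyp z))) hdisk"

locale disk_point_pair =
  fixes A B :: complex
  assumes A: "A \<in> hdisk" and B: "B \<in> hdisk" and AB: "A \<noteq> B"
begin

abbreviation normal :: lvec where
  "normal \<equiv> mcross (to_hyp A) (to_hyp B)"

lemma minner_normal_pos: "minner normal normal > 0"
proof -
  have "to_hyp A \<noteq> to_hyp B" using A B AB to_hyp_inj by blast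
  then have "- minner (to_hyp A) (to_hyp B) > 1"
    using reverse_cauchy_schwarz_strict[OF hyperboloid_to_hyp[OF A] hyperboloid_to_hyp[OF B]] by blast
  then have "1 * 1 < (- minner (to_hyp A) (to_hyp B)) * (- minner (to_hyp A) (to_hyp B))"
    by (intro mult_strict_mono) auto
  then show ?thesis
    using hyperboloid_to_hyp[OF A] hyperboloid_to_hyp[OF B]
    by (simp add: minner_mcross_self hyperboloid_def power2_eq_square)
qed

lemma normal_nonzero: "minner normal normal \<noteq> 0"
  using minner_normal_pos by simp

lemma disk_refl_in:
  assumes "z \<in> hdisk"
  shows "disk_refl A B z \<in> hdisk" "to_hyp (disk_refl A B z) = lorentz_refl normal (to_hyp z)"
proof -
  have "hyperboloid (lorentz_refl normal (to_hyp z))"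
    using hyperboloid_lorentz_refl[OF normal_nonzero hyperboloid_to_hyp[OF A]]
      hyperboloid_to_hyp[OF assms] by (simp add: minner_mcross_orth)
  then show "disk_refl A B z \<in> hdisk" "to_hyp (disk_refl A B z) = lorentz_refl normal (to_hyp z)"
    using assms by (simp_all add: disk_refl_def to_disk_in_hdisk to_hyp_to_disk)
qed

lemma disk_refl_eq_self_iff:
  assumes "z \<in> hdisk"
  shows "disk_refl A B z = z \<longleftrightarrow> minner (to_hyp z) normal = 0"
proof -
  have "disk_refl A B z = z \<longleftrightarrow> to_hyp (disk_refl A B z) = to_hyp z"
    using to_hyp_inj[OF disk_refl_in(1)[OF assms] assms] by auto
  also have "\<dots> \<longleftrightarrow> minner (to_hyp z) normal = 0"
    unfolding disk_refl_in(2)[OF assms] by (rule lorentz_refl_eq_self_iff[OF normal_nonzero])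
  finally show ?thesis .
qed

lemma h_isometry_disk_refl: "h_isometry (disk_refl A B)"
  unfolding h_isometry_def
proof (intro conjI ballI)
  show "disk_refl A B \<in> hdisk \<rightarrow>\<^sub>E hdisk" using disk_refl_in by (auto simp: disk_refl_def)
  fix z w assume z: "z \<in> hdisk" and w: "w \<in> hdisk"
  then show "hdist (disk_refl A B z) (disk_refl A B w) = hdist z w"
    using disk_refl_in[OF z] disk_refl_in[OF w]
    by (simp add: hdist_eq_arcosh_minner minner_lorentz_refl[OF normal_nonzero])
qed

lemma disk_refl_not_id: "disk_refl A B \<noteq> h_id"
proof -
  obtain n0 n1 n2 where N: "normal = (n0, n1, n2)" by (cases normal) auto
  have "normal \<noteq> 0" using minner_normal_pos by (auto simp: minner_def zero_prod_def)
  have "to_hyp 0 = (1, 0, 0)" "to_hyp (1/2) = (5/3, 4/3, 0)" "to_hyp (\<i>/2) = (5/3, 0, 4/3)"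
    by (simp_all add: to_hyp_def power2_eq_square)
  then have "\<exists>z \<in> {0, 1/2, \<i>/2}. minner (to_hyp z) normal \<noteq> 0"
    using \<open>normal \<noteq> 0\<close> by (auto simp: N minner_def zero_prod_def)
  moreover have "{0, 1/2, \<i>/2} \<subseteq> hdisk" by (simp add: mem_hdisk norm_divide)
  ultimately obtain z where "z \<in> hdisk" "disk_refl A B z \<noteq> z"
    using disk_refl_eq_self_iff by blast
  moreover have "h_id z = z" using \<open>z \<in> hdisk\<close> by (simp add: h_id_def)
  ultimately show ?thesis by auto
qed

text \<open>An isometry fixing \<open>A\<close> and \<open>B\<close> moves \<open>to_hyp z\<close> by a multiple of the normal, and
  the hyperboloid meets such a line in at most two points.\<close>

lemma isometry_fixing_pair_cases:
  assumes f: "h_isometry f" and fA: "f A = A" and fB: "f B = B" and z: "z \<in> hdisk"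
  shows "f z = z \<or> f z = disk_refl A B z"
proof -
  define X Z where "X = to_hyp z" and "Z = to_hyp (f z) - to_hyp z"
  have fz: "f z \<in> hdisk" using f z by (auto simp: h_isometry_def)
  have "minner Z (to_hyp A) = 0" "minner Z (to_hyp B) = 0"
    using h_isometry_minner[OF f z A] h_isometry_minner[OF f z B] fA fB
    by (simp_all add: Z_def minner_linear)
  then have "minner normal normal *\<^sub>R Z = minner Z normal *\<^sub>R normal" by (rule minner_orth_mcross)
  then have "(1 / minner normal normal) *\<^sub>R (minner normal normal *\<^sub>R Z)
      = (minner Z normal / minner normal normal) *\<^sub>R normal" by simp
  then obtain c where c: "to_hyp (f z) = X + c *\<^sub>R normal"
    using normal_nonzero by (auto simp: Z_def X_def algebra_simps)
  have "minner (to_hyp (f z)) (to_hyp (f z)) = minner X X"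
    using h_isometry_minner[OF f z z] by (simp add: X_def)
  then have "c * (2 * minner X normal + c * minner normal normal) = 0"
    unfolding c by (simp add: minner_linear minner_commute[of normal X] algebra_simps)
  then have "c = 0 \<or> 2 * minner X normal + c * minner normal normal = 0" by simp
  then have "c = 0 \<or> c = - (2 * minner X normal / minner normal normal)"
  proof
    assume "2 * minner X normal + c * minner normal normal = 0"
    then have "c = - (2 * minner X normal / minner normal normal)"
      using normal_nonzero by (simp add: field_simps)
    then show ?thesis ..
  qed simp
  then show ?thesis
  proof
    assume "c = 0"
    then have "to_hyp (f z) = to_hyp z" using c by (simp add: X_def)
    then show ?thesis using to_hyp_inj fz z by blast
  next
    assume "c = - (2 * minner X normal / minner normal normal)"
    then have "to_hyp (f z) = lorentz_refl normal X" unfolding c lorentz_refl_def by simp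
    then have "to_hyp (f z) = to_hyp (disk_refl A B z)" using disk_refl_in(2)[OF z] by (simp add: X_def)
    then show ?thesis using to_hyp_inj fz disk_refl_in(1)[OF z] by blast
  qed
qed

lemma isometry_fixing_pair_no_mix:
  assumes f: "h_isometry f" and z1: "z1 \<in> hdisk" "f z1 = z1" "disk_refl A B z1 \<noteq> z1"
    and z2: "z2 \<in> hdisk" "f z2 = disk_refl A B z2" "disk_refl A B z2 \<noteq> z2"
  shows False
proof -
  have "minner (to_hyp z1) (lorentz_refl normal (to_hyp z2)) = minner (to_hyp z1) (to_hyp z2)"
    using h_isometry_minner[OF f z1(1) z2(1)] z1(2) z2(2) disk_refl_in(2)[OF z2(1)] by simp
  then have "2 * minner (to_hyp z2) normal / minner normal normal * minner (to_hyp z1) normal = 0"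
    by (simp add: lorentz_refl_def minner_linear)
  then show False using z1 z2 disk_refl_eq_self_iff normal_nonzero by simp
qed

lemma disk_refl_unique:
  assumes f: "h_isometry f" and fA: "f A = A" and fB: "f B = B" and "f \<noteq> h_id"
  shows "f = disk_refl A B"
proof (rule extensionalityI)
  show "f \<in> extensional hdisk" "disk_refl A B \<in> extensional hdisk"
    using f by (simp_all add: h_isometry_def PiE_def disk_refl_def)
  note cases = isometry_fixing_pair_cases[OF f fA fB]
  show "f z = disk_refl A B z" if z: "z \<in> hdisk" for z
  proof (cases "\<exists>z1\<in>hdisk. f z1 = z1 \<and> disk_refl A B z1 \<noteq> z1")
    case True
    then obtain z1 where z1: "z1 \<in> hdisk" "f z1 = z1" "disk_refl A B z1 \<noteq> z1" by blast
    have "f w = h_id w" for w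
    proof (cases "w \<in> hdisk")
      case True
      then show ?thesis using cases isometry_fixing_pair_no_mix[OF f z1] by (fastforce simp: h_id_def)
    next
      case False
      then show ?thesis using f by (auto simp: h_isometry_def h_id_def PiE_def extensional_def)
    qed
    then show ?thesis using \<open>f \<noteq> h_id\<close> by auto
  next
    case False
    then show ?thesis using cases[OF z] z by auto
  qed
qed

lemma reflection_in_geodesic_through: "reflection_in (geodesic_through A B) = disk_refl A B"
  unfolding geodesic_through_eq_disk_line[OF A B AB] reflection_in_def
proof (rule the_equality)
  have "disk_refl A B z = z" if "z \<in> disk_line A B" for z
    using that disk_refl_eq_self_iff by (simp add: disk_line_def)
  then show "h_isometry (disk_refl A B) \<and> (\<forall>x\<in>disk_line A B. disk_refl A B x = x) \<and> disk_refl A B \<noteq> h_id"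
    using h_isometry_disk_refl disk_refl_not_id by blast
  fix f assume "h_isometry f \<and> (\<forall>x\<in>disk_line A B. f x = x) \<and> f \<noteq> h_id"
  then show "f = disk_refl A B"
    using disk_refl_unique geodesic_line_disk_line[OF A B AB] by blast
qed

end

section \<open>Isometries with constant displacement along a geodesic\<close>

lemma minner_hline_hline:
  "minner (hline p v s) (hline p' v' s) =
     cosh s * cosh s * minner p p' + cosh s * sinh s * (minner p v' + minner v p') + sinh s * sinh s * minner v v'"
  by (simp add: hline_def minner_linear algebra_simps)

lemma hline_constant_distance_frame:
  assumes fr: "line_frame p v" and fr': "line_frame p' v'"
    and d: "\<And>s. minner (hline p v s) (hline p' v' s) = - C"
  shows "p' = C *\<^sub>R p + minner p' v *\<^sub>R v" "v' = minner p' v *\<^sub>R p + C *\<^sub>R v"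
proof -
  note frD = line_frameD[OF fr] and frD' = line_frameD[OF fr']
  define \<beta> where "\<beta> = minner p' v"
  have a: "minner p p' = - C" using d[of 0] by (simp add: minner_hline_hline)
  have f1: "cosh 1 * cosh 1 * minner p p' + cosh 1 * sinh 1 * (minner p v' + minner v p') + sinh 1 * sinh 1 * minner v v' = - C"
    using d[of 1] by (simp add: minner_hline_hline)
  moreover have "cosh 1 * cosh 1 * minner p p' - cosh 1 * sinh 1 * (minner p v' + minner v p') + sinh 1 * sinh 1 * minner v v' = - C"
    using d[of "-1"] by (simp add: minner_hline_hline)
  ultimately have "cosh 1 * sinh 1 * (minner p v' + minner v p') = 0" by linarith
  then have b: "minner v' p = - \<beta>" by (simp add: \<beta>_def minner_commute)
  have "sinh 1 * sinh 1 * minner v v' = - C - cosh 1 * cosh 1 * minner p p'"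
    using f1 b by (simp add: \<beta>_def minner_commute algebra_simps)
  also have "\<dots> = sinh 1 * sinh 1 * C"
    using a cosh_square_eq[of "1::real"] by (simp add: power2_eq_square algebra_simps)
  finally have "minner v v' = C" by simp
  then have c: "minner v' v = C" by (simp add: minner_commute)
  define r r' where "r = p' - C *\<^sub>R p - \<beta> *\<^sub>R v" and "r' = v' - \<beta> *\<^sub>R p - C *\<^sub>R v"
  note commute = minner_commute[of p' p] minner_commute[of v p'] minner_commute[of p v'] minner_commute[of v v']
  have "minner r p = 0" "minner r' p = 0"
    using frD a b by (simp_all add: r_def r'_def minner_linear commute)
  moreover have "minner r r + minner r' r' = 0"
    using frD frD' a b c by (simp add: r_def r'_def minner_linear commute \<beta>_def[symmetric] algebra_simps)
  ultimately have "minner r r = 0" "minner r' r' = 0"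
    using orth_timelike_spacelike(1)[OF frD(1)] by (simp_all add: add_nonneg_eq_0_iff)
  then have "r = 0" "r' = 0"
    using orth_timelike_spacelike(2)[OF frD(1)] \<open>minner r p = 0\<close> \<open>minner r' p = 0\<close> by (metis less_irrefl)+
  then show "p' = C *\<^sub>R p + minner p' v *\<^sub>R v" "v' = minner p' v *\<^sub>R p + C *\<^sub>R v"
    by (simp_all add: r_def r'_def \<beta>_def algebra_simps)
qed

lemma constant_displacement_translation:
  assumes fr: "line_frame p v" and fr': "line_frame p' v'" and "L \<ge> 0"
    and d: "\<And>s. minner (hline p v s) (hline p' v' s) = - cosh L"
  shows "\<exists>t. \<bar>t\<bar> = L \<and> (\<forall>s. hline p' v' s = hline p v (s + t))"
proof -
  define \<beta> where "\<beta> = minner p' v"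
  note p' = hline_constant_distance_frame[OF fr fr' d, folded \<beta>_def]
  have "minner p' p' = -1" using line_frameD[OF fr'] by simp
  then have "\<beta> * \<beta> = sinh L * sinh L"
    unfolding p'(1) using line_frameD[OF fr] cosh_square_eq[of L, unfolded power2_eq_square] by (simp add: minner_linear algebra_simps)
  then have "\<beta> = sinh L \<or> \<beta> = - sinh L" by (simp add: square_eq_iff)
  moreover have "sinh L \<ge> 0" using \<open>L \<ge> 0\<close> by simp
  moreover define t where "t = (if \<beta> \<ge> 0 then L else - L)"
  ultimately have t: "\<bar>t\<bar> = L" "sinh t = \<beta>" "cosh t = cosh L"
    using \<open>L \<ge> 0\<close> by (auto simp: t_def)
  then have "hline p' v' s = hline p v (s + t)" for s
    unfolding p' hline_def cosh_add sinh_add t(2,3) by (simp add: algebra_simps)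
  then show ?thesis using t(1) by blast
qed

lemma displacement_funpow:
  assumes g: "h_isometry g" and "geodesic_line \<xi>" and "L \<ge> 0"
    and disp: "\<forall>x\<in>\<xi>. hdist x (g x) = L" and x: "x \<in> \<xi>"
  shows "hdist x ((g ^^ k) x) = real k * L"
proof -
  obtain \<gamma> where \<gamma>: "\<forall>s. \<gamma> s \<in> hdisk" "\<forall>s t. hdist (\<gamma> s) (\<gamma> t) = \<bar>s - t\<bar>" "\<xi> = range \<gamma>"
    using assms(2) unfolding geodesic_line_def by blast
  obtain p v where fr: "line_frame p v" and p: "\<forall>s. to_hyp (\<gamma> s) = hline p v s"
    using geodesic_is_hline[OF \<gamma>(1,2)] by blast
  have g\<gamma>: "\<forall>s. g (\<gamma> s) \<in> hdisk" "\<forall>s t. hdist (g (\<gamma> s)) (g (\<gamma> t)) = \<bar>s - t\<bar>"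
    using g \<gamma>(1,2) by (auto simp: h_isometry_def)
  obtain p' v' where fr': "line_frame p' v'" and p': "\<forall>s. to_hyp (g (\<gamma> s)) = hline p' v' s"
    using geodesic_is_hline[OF g\<gamma>] by blast
  have "minner (hline p v s) (hline p' v' s) = - cosh L" for s
    using minner_eq_cosh_hdist[of "\<gamma> s" "g (\<gamma> s)"] \<gamma> disp p p' g\<gamma>(1) by auto
  then obtain t where t: "\<bar>t\<bar> = L" "\<forall>s. hline p' v' s = hline p v (s + t)"
    using constant_displacement_translation[OF fr fr' \<open>L \<ge> 0\<close>] by blast
  have step: "g (\<gamma> s) = \<gamma> (s + t)" for s
    using to_hyp_inj[of "g (\<gamma> s)" "\<gamma> (s + t)"] p p' t(2) g\<gamma>(1) \<gamma>(1) by simp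
  have "(g ^^ k) (\<gamma> s) = \<gamma> (s + real k * t)" for s
    by (induction k) (simp_all add: step algebra_simps)
  moreover obtain s where "x = \<gamma> s" using x \<gamma>(3) by auto
  ultimately show ?thesis using \<gamma>(2) t(1) by (simp add: abs_mult)
qed

section \<open>The reflection group\<close>

lemma cot_mult_gt_1:
  fixes a b :: real
  assumes "0 < a" "0 < b" "a + b < pi / 2"
  shows "cot a * cot b > 1"
proof -
  have "sin a > 0" "sin b > 0" using assms by (auto intro!: sin_gt_zero)
  moreover have "cos (a + b) > 0" using assms by (intro cos_gt_zero) auto
  then have "cos a * cos b > sin a * sin b" by (simp add: cos_add)
  ultimately show ?thesis by (simp add: cot_def pos_less_divide_eq)
qed

lemma vertex_in_hdisk: "vertex n m i \<in> hdisk"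
  using tanh_real_bounds[of "circumradius n m / 2"] by (simp add: vertex_def mem_hdisk norm_mult abs_less_iff)

lemma vertex_neq_Suc:
  assumes "gamma_defined n m"
  shows "vertex n m i \<noteq> vertex n m (Suc i)"
proof
  have n: "n \<ge> 3" and m: "m \<ge> 4" and ineq: "1 / real n + 1 / real m < 1 / 2"
    using assms by (auto simp: gamma_defined_def)
  have "pi * (1 / real n + 1 / real m) < pi * (1 / 2)" using ineq by simp
  then have "cot (pi / real n) * cot (pi / real m) > 1"
    using n m by (intro cot_mult_gt_1) (auto simp: algebra_simps)
  then have "tanh (circumradius n m / 2) \<noteq> 0" by (simp add: circumradius_def)
  moreover assume "vertex n m i = vertex n m (Suc i)"
  ultimately have "cis (2 * pi * real (Suc i) / real n) / cis (2 * pi * real i / real n) = 1"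
    by (simp add: vertex_def)
  moreover have "2 * pi * real (Suc i) / real n - 2 * pi * real i / real n = 2 * pi / real n"
    by (simp add: field_simps add_divide_distrib)
  ultimately have "cos (2 * pi / real n) = 1" by (metis cis_divide cis.sel(1) one_complex.sel(1))
  then obtain k :: int where "2 * pi / real n = k * 2 * pi" by (auto simp: cos_one_2pi_int)
  then have "pi * (2 / real n) = pi * (k * 2)" by (simp add: mult.commute mult.left_commute)
  then have "2 / real n = k * 2" using n by (simp add: field_simps)
  then have "1 / real n = k" by simp
  moreover have "0 < 1 / real n" "1 / real n < 1" using n by auto
  ultimately show False by simp
qed

lemma h_isometry_refl:
  assumes "gamma_defined n m"
  shows "h_isometry (refl n m i)"
proof -
  interpret disk_point_pair "vertex n m i" "vertex n m (Suc i)"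
    using vertex_in_hdisk vertex_neq_Suc[OF assms] by unfold_locales
  show ?thesis unfolding refl_def reflection_in_geodesic_through by (rule h_isometry_disk_refl)
qed

definition word_map :: "nat \<Rightarrow> nat \<Rightarrow> nat list \<Rightarrow> complex \<Rightarrow> complex" where
  "word_map n m w = foldr (\<lambda>i f. refl n m i \<circ> f) w id"

lemma word_elt_eq_word_map: "word_elt n m w = restrict (word_map n m w) hdisk"
  by (simp add: word_elt_def word_map_def)

lemma word_map_append: "word_map n m (u @ v) = word_map n m u \<circ> word_map n m v"
proof -
  have "foldr (\<lambda>i f. refl n m i \<circ> f) u h = foldr (\<lambda>i f. refl n m i \<circ> f) u id \<circ> h" for h
    by (induction u) auto
  then show ?thesis by (simp add: word_map_def)
qed

lemma word_map_replicate: "word_map n m (concat (replicate k w)) = word_map n m w ^^ k"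
  by (induction k) (simp_all add: word_map_append, simp add: word_map_def)

lemma word_map_isometry:
  assumes "gamma_defined n m" "z \<in> hdisk" "z' \<in> hdisk"
  shows "word_map n m w z \<in> hdisk" "hdist (word_map n m w z) (word_map n m w z') = hdist z z'"
proof -
  have "\<forall>z\<in>hdisk. \<forall>z'\<in>hdisk. word_map n m w z \<in> hdisk \<and> hdist (word_map n m w z) (word_map n m w z') = hdist z z'"
    using h_isometry_refl[OF assms(1)] by (induction w) (auto simp: word_map_def h_isometry_def)
  then show "word_map n m w z \<in> hdisk" "hdist (word_map n m w z) (word_map n m w z') = hdist z z'"
    using assms(2,3) by auto
qed

lemma h_isometry_word_elt: "gamma_defined n m \<Longrightarrow> h_isometry (word_elt n m w)"
  unfolding h_isometry_def word_elt_eq_word_map using word_map_isometry by auto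

lemma gpow_word_elt:
  assumes "gamma_defined n m"
  shows "gpow (word_elt n m w) k = word_elt n m (concat (replicate k w))"
proof -
  have "(restrict (word_map n m w) hdisk ^^ k) z = (word_map n m w ^^ k) z \<and> (word_map n m w ^^ k) z \<in> hdisk"
    if "z \<in> hdisk" for z
    using that by (induction k) (simp_all add: word_map_isometry[OF assms])
  then show ?thesis unfolding gpow_def word_elt_eq_word_map word_map_replicate by (auto intro!: restrict_ext)
qed

lemma gmult_ginv_h_id:
  assumes "G \<in> hdisk \<rightarrow>\<^sub>E hdisk"
  shows "gmult (ginv h_id) G = G"
proof
  have "inv_into hdisk h_id z = z" if "z \<in> hdisk" for z
    using inv_into_f_f[of h_id hdisk z] that by (simp add: h_id_def inj_on_def)
  then show "gmult (ginv h_id) G z = G z" for z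
    using assms by (cases "z \<in> hdisk") (auto simp: gmult_def ginv_def PiE_def extensional_def)
qed

lemma h_isometry_funpow:
  assumes "h_isometry g" "z \<in> hdisk" "z' \<in> hdisk"
  shows "(g ^^ k) z \<in> hdisk" "hdist ((g ^^ k) z) ((g ^^ k) z') = hdist z z'"
proof -
  have "\<forall>z\<in>hdisk. \<forall>z'\<in>hdisk. (g ^^ k) z \<in> hdisk \<and> hdist ((g ^^ k) z) ((g ^^ k) z') = hdist z z'"
    using assms(1) by (induction k) (auto simp: h_isometry_def)
  then show "(g ^^ k) z \<in> hdisk" "hdist ((g ^^ k) z) ((g ^^ k) z') = hdist z z'"
    using assms(2,3) by auto
qed

section \<open>The random walk\<close>

lemma sets_stake_pmf:
  fixes \<mu> :: "'a::countable pmf"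
  shows "{\<omega> \<in> space (stream_space (measure_pmf \<mu>)). stake j \<omega> \<in> T} \<in> sets (stream_space (measure_pmf \<mu>))"
proof -
  have "sets (stream_space (measure_pmf \<mu>)) = sets (stream_space (count_space UNIV))"
    by (rule sets_stream_space_cong) simp
  then have "stake j \<in> measurable (stream_space (measure_pmf \<mu>)) (count_space UNIV)"
    using measurable_stake by (simp add: measurable_cong_sets)
  from measurable_sets[OF this, of T] show ?thesis by (simp add: vimage_def Int_def conj_commute)
qed

lemma measure_stake_eq:
  fixes \<mu> :: "'a::countable pmf"
  shows "measure (stream_space (measure_pmf \<mu>)) {\<omega> \<in> space (stream_space (measure_pmf \<mu>)). stake (length W) \<omega> = W}
     = prod_list (map (pmf \<mu>) W)"
proof (induction W)
  case Nil
  interpret prob_space "stream_space (measure_pmf \<mu>)"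
    by (rule prob_space.prob_space_stream_space[OF prob_space_measure_pmf])
  show ?case by (simp add: prob_space)
next
  case (Cons a W)
  let ?S = "stream_space (measure_pmf \<mu>)"
  define q where "q = measure ?S {\<omega> \<in> space ?S. stake (length W) \<omega> = W}"
  have "{\<omega> \<in> space ?S. stake (length (a # W)) \<omega> = a # W} \<in> sets ?S"
    using sets_stake_pmf[of \<mu> "length (a # W)" "{a # W}"] by simp
  note prob_space.prob_stream_space[OF prob_space_measure_pmf this]
  moreover have "ennreal (measure ?S {\<omega> \<in> space ?S. stake (length (a # W)) (t ## \<omega>) = a # W})
      = ennreal q * indicator {a} t" for t
    by (cases "t = a") (simp_all add: q_def)
  ultimately have "ennreal (measure ?S {\<omega> \<in> space ?S. stake (length (a # W)) \<omega> = a # W})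
      = (\<integral>\<^sup>+t. ennreal q * indicator {a} t \<partial>measure_pmf \<mu>)"
    by simp
  also have "\<dots> = ennreal (q * pmf \<mu> a)"
    by (simp add: nn_integral_cmult_indicator emeasure_pmf_single ennreal_mult q_def)
  finally have "measure ?S {\<omega> \<in> space ?S. stake (length (a # W)) \<omega> = a # W} = q * pmf \<mu> a"
    by (subst (asm) ennreal_inj) (simp_all add: q_def)
  then show ?case using Cons by (simp add: q_def)
qed

lemma first_entrance_ge_prod_list:
  assumes "word_elt n m W = gmult (ginv x) y"
  shows "first_entrance n m \<mu> x y \<ge> prod_list (map (pmf \<mu>) W)"
proof -
  let ?S = "stream_space (measure_pmf \<mu>)"
  interpret prob_space ?S
    by (rule prob_space.prob_space_stream_space[OF prob_space_measure_pmf])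
  define E where "E = {\<omega> \<in> space ?S. \<exists>k. word_elt n m (stake k \<omega>) = gmult (ginv x) y}"
  have "E = (\<Union>k. {\<omega> \<in> space ?S. stake k \<omega> \<in> {l. word_elt n m l = gmult (ginv x) y}})"
    by (auto simp: E_def)
  also have "\<dots> \<in> sets ?S" using sets_stake_pmf by (intro sets.countable_UN) auto
  finally have "E \<in> sets ?S" .
  have "{\<omega> \<in> space ?S. stake (length W) \<omega> = W} \<subseteq> E"
    unfolding E_def using assms by (auto intro: exI[where x="length W"])
  then have "measure ?S {\<omega> \<in> space ?S. stake (length W) \<omega> = W} \<le> measure ?S E"
    using \<open>E \<in> sets ?S\<close> by (rule finite_measure_mono)
  then show ?thesis by (simp add: measure_stake_eq first_entrance_def E_def)
qed

lemma green_dist_gpow_le: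
  assumes "gamma_defined n m" "word_elt n m w = g" "\<forall>j<length w. pmf \<mu> (w ! j) > 0"
  shows "green_dist n m \<mu> h_id (gpow g k) \<le> - real k * (\<Sum>j<length w. ln (pmf \<mu> (w ! j)))"
proof -
  define q where "q = prod_list (map (pmf \<mu>) w)"
  have q_eq: "q = (\<Prod>j<length w. pmf \<mu> (w ! j))"
    by (simp add: q_def prod.list_conv_set_nth atLeast0LessThan)
  have "q > 0" unfolding q_eq using assms(3) by (intro prod_pos) auto
  have ln_q: "ln q = (\<Sum>j<length w. ln (pmf \<mu> (w ! j)))"
    unfolding q_eq using assms(3) by (subst ln_prod) auto
  define W where "W = concat (replicate k w)"
  have gW: "gpow g k = word_elt n m W" using gpow_word_elt[OF assms(1), of w k] assms(2) by (simp add: W_def)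
  then have "gpow g k \<in> hdisk \<rightarrow>\<^sub>E hdisk" using h_isometry_word_elt[OF assms(1)] by (simp add: h_isometry_def)
  then have "word_elt n m W = gmult (ginv h_id) (gpow g k)" using gmult_ginv_h_id gW by simp
  moreover have "prod_list (map (pmf \<mu>) (concat (replicate k w))) = q ^ k"
    by (induction k) (simp_all add: q_def)
  ultimately have "q ^ k \<le> first_entrance n m \<mu> h_id (gpow g k)"
    using first_entrance_ge_prod_list[of n m W h_id "gpow g k" \<mu>] by (simp add: W_def)
  moreover have "q ^ k > 0" using \<open>q > 0\<close> by simp
  ultimately have "ln (q ^ k) \<le> ln (first_entrance n m \<mu> h_id (gpow g k))" by simp
  then have "real k * ln q \<le> ln (first_entrance n m \<mu> h_id (gpow g k))"
    using \<open>q > 0\<close> by (simp add: ln_realpow)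
  then show ?thesis using ln_q by (simp add: green_dist_def)
qed

lemma geom_dist_gpow_ge:
  assumes g: "h_isometry g" and "geodesic_line \<xi>" "L \<ge> 0" "\<forall>x\<in>\<xi>. hdist x (g x) = L"
    and x0: "x0 \<in> hdisk"
  obtains D where "\<And>k. geom_dist x0 h_id (gpow g k) \<ge> real k * L - D"
proof -
  obtain x where x: "x \<in> \<xi>" "x \<in> hdisk" using \<open>geodesic_line \<xi>\<close> unfolding geodesic_line_def by auto
  have "geom_dist x0 h_id (gpow g k) \<ge> real k * L - 2 * hdist x x0" for k
  proof -
    note gk = h_isometry_funpow[OF g]
    have "real k * L = hdist x ((g ^^ k) x)" using displacement_funpow[OF g assms(2-4) x(1)] by simp
    also have "\<dots> \<le> hdist x x0 + (hdist x0 ((g ^^ k) x0) + hdist ((g ^^ k) x0) ((g ^^ k) x))"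
      using hdist_triangle gk x(2) x0 by (meson add_left_mono order_trans)
    also have "hdist ((g ^^ k) x0) ((g ^^ k) x) = hdist x x0"
      using gk(2)[OF x0 x(2)] by (simp add: hdist_commute)
    also have "hdist x0 ((g ^^ k) x0) = geom_dist x0 h_id (gpow g k)"
      using x0 by (simp add: geom_dist_def gpow_def h_id_def)
    finally show ?thesis by simp
  qed
  then show ?thesis using that by blast
qed

lemma SUP_abs_diff_linear_growth:
  fixes f g :: "nat \<Rightarrow> real"
  assumes "\<And>k. f k \<le> real k * a" "\<And>k. g k \<ge> real k * b - D" "a < b"
  shows "(SUP k\<in>{1..}. ereal \<bar>f k - g k\<bar>) = \<infinity>"
proof (rule SUP_PInfty)
  fix N :: nat
  define k where "k = nat \<lceil>(real N + D) / (b - a)\<rceil> + 1"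
  have "(real N + D) / (b - a) \<le> real k" unfolding k_def by linarith
  then have "real N + D \<le> real k * (b - a)" using \<open>a < b\<close> by (simp add: pos_divide_le_eq)
  then have "real N \<le> \<bar>f k - g k\<bar>" using assms(1,2)[of k] by (simp add: algebra_simps)
  moreover have "k \<in> {1..}" by (simp add: k_def)
  ultimately show "\<exists>k\<in>{1..}. ereal (real N) \<le> ereal \<bar>f k - g k\<bar>" by auto
qed

theorem lemma3:
  fixes n m :: nat and \<mu> :: "nat pmf" and g :: "complex \<Rightarrow> complex"
    and \<xi> :: "complex set" and L :: real and w :: "nat list" and x0 :: complex
  assumes "gamma_defined n m"
    and "set_pmf \<mu> \<subseteq> {..<n}"
    and "\<forall>i<n. pmf \<mu> i > 0"
    and "g \<in> Gamma n m"
    and "geodesic_line \<xi>" and "L > 0" and "\<forall>x\<in>\<xi>. hdist x (g x) = L"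
    and "w \<in> lists {..<n}" and "length w = word_length n m g" and "word_elt n m w = g"
    and "L > - (\<Sum>j<length w. ln (pmf \<mu> (w ! j)))"
    and "trivial_stabilizer n m x0"
  shows "(SUP k\<in>{1..}. ereal \<bar>green_dist n m \<mu> h_id (gpow g k) - geom_dist x0 h_id (gpow g k)\<bar>) = \<infinity>"
proof -
  have "\<forall>j<length w. pmf \<mu> (w ! j) > 0"
    using assms(3,8) by (auto simp: lists_eq_set dest!: nth_mem)
  note green = green_dist_gpow_le[OF assms(1,10) this]
  have "h_isometry g" using h_isometry_word_elt[OF assms(1), of w] assms(10) by simp
  moreover have "x0 \<in> hdisk" using assms(12) by (simp add: trivial_stabilizer_def)
  ultimately obtain D where D: "\<And>k. geom_dist x0 h_id (gpow g k) \<ge> real k * L - D"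
    using geom_dist_gpow_ge assms(5-7) by (metis less_imp_le)
  show ?thesis
  proof (rule SUP_abs_diff_linear_growth)
    show "green_dist n m \<mu> h_id (gpow g k) \<le> real k * - (\<Sum>j<length w. ln (pmf \<mu> (w ! j)))" for k
      using green[of k] by simp
  qed (use D assms(11) in auto)
qed

end
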